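(* Let $m>n$ be positive integers and let $\sigma$ be a shuffle whose last entry is $\sigma(m')=n$, and $\lambda=\zeta(\sigma)$ (so $\lambda_1=m$). Then: (a) $\zeta(\overline\sigma)=\overline\lambda$. (b) Let $\alpha=\epsilon_i-\delta_j$ and suppose $i$ immediately precedes $j'$ in the one-line notation of $\sigma$. Let $r_\alpha(\sigma)=(i,j')\sigma$ be the shuffle obtained by interchanging $i$ and $j'$ in the one-line notation. Then $\overline{r_\alpha(\sigma)}=r_{\nu\alpha}(\overline\sigma)$, where $r_{\nu\alpha}(\overline\sigma)=(i+1,j')\overline\sigma$ (with $i+1$ read as $1$ if $i=n$).
   Context: Let $I=\{1,\dots,n\}\cup\{1',\dots,m'\}$ and for a permutation $w$ of $I$ its one-line notation is $(w(1),\dots,w(n),w(1'),\dots,w(m'))$ (positions ordered $1<\dots<n<1'<\dots<m'$). A shuffle is a permutation $\sigma$ of $I$ whose one-line notation contains $1,\dots,n$ and $1',\dots,m'$ each as subsequences in increasing order. $\zeta(\sigma)$ is the partition obtained as follows: draw a lattice path in an $n\times m$ rectangle from the top-left to the bottom-right corner whose $k$-th unit step is down if the $k$-th entry of the one-line notation is unprimed and right otherwise; $\zeta(\sigma)$ is the Young diagram of boxes below the path (row $\epsilon_i$, counted from the top, has $\lambda_{n+1-i}$ boxes). For $\lambda_1=m$, $\overline\lambda=(\lambda_2,\dots,\lambda_n,0)$. Let $\nu^{-1}$ be the permutation of $I$ with $\nu^{-1}(k)=k+1$ for $k\in[n-1]$, $\nu^{-1}(n)=1$, fixing primed elements; for $\sigma$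 with last entry $n$, $\overline\sigma$ is the shuffle with one-line notation $(1,\nu^{-1}\sigma(1),\dots,\nu^{-1}\sigma(n),\nu^{-1}\sigma(1'),\dots,\nu^{-1}\sigma((m-1)'))$, i.e. $1$ followed by $\nu^{-1}$ applied to the first $m+n-1$ entries of $\sigma$. $\nu(\epsilon_i-\delta_j)=\epsilon_{i+1}-\delta_j$ (indices of $\epsilon$ mod $n$ in $\{1,\dots,n\}$). *)

theory Defs
  imports Main "HOL-Combinatorics.Permutations" "HOL-Combinatorics.Transposition"
begin

text \<open>Elements of I: U i stands for the unprimed i, P j for the primed j'.\<close>
datatype idx = U nat | P nat

definition Iset :: "nat \<Rightarrow> nat \<Rightarrow> idx set" where
  "Iset n m = U ` {1..n} \<union> P ` {1..m}"

definition positions :: "nat \<Rightarrow> nat \<Rightarrow> idx list" where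
  "positions n m = map U [1..<n+1] @ map P [1..<m+1]"

definition oneline :: "nat \<Rightarrow> nat \<Rightarrow> (idx \<Rightarrow> idx) \<Rightarrow> idx list" where
  "oneline n m w = map w (positions n m)"

definition of_oneline :: "nat \<Rightarrow> nat \<Rightarrow> idx list \<Rightarrow> idx \<Rightarrow> idx" where
  "of_oneline n m L x = (case x of
      U i \<Rightarrow> if 1 \<le> i \<and> i \<le> n then L ! (i - 1) else x
    | P j \<Rightarrow> if 1 \<le> j \<and> j \<le> m then L ! (n + j - 1) else x)"

definition is_shuffle :: "nat \<Rightarrow> nat \<Rightarrow> (idx \<Rightarrow> idx) \<Rightarrow> bool" where
  "is_shuffle n m s \<longleftrightarrow> s permutes Iset n m \<and>
     oneline n m s \<in> shuffles (map U [1..<n+1]) (map P [1..<m+1])"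

text \<open>Lattice path: rows c w lists, from the top row down, the number of boxes
  below the path in each row (= number of right steps taken before the
  corresponding down step).\<close>
fun path_rows :: "idx list \<Rightarrow> nat \<Rightarrow> nat list" where
  "path_rows [] c = []"
| "path_rows (U _ # w) c = c # path_rows w c"
| "path_rows (P _ # w) c = path_rows w (Suc c)"

text \<open>zeta returns the partition as the list [lambda_1, ..., lambda_n];
  row epsilon_i (from the top) has lambda_(n+1-i) boxes.\<close>
definition zeta :: "nat \<Rightarrow> nat \<Rightarrow> (idx \<Rightarrow> idx) \<Rightarrow> nat list" where
  "zeta n m s = rev (path_rows (oneline n m s) 0)"

definition lbar :: "nat list \<Rightarrow> nat list" where
  "lbar l = tl l @ [0]"

definition nuinv :: "nat \<Rightarrow> idx \<Rightarrow> idx" where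
  "nuinv n x = (case x of U k \<Rightarrow> if k = n then U 1 else if 1 \<le> k \<and> k < n then U (k + 1) else U k
                        | P j \<Rightarrow> P j)"

definition sbar :: "nat \<Rightarrow> nat \<Rightarrow> (idx \<Rightarrow> idx) \<Rightarrow> idx \<Rightarrow> idx" where
  "sbar n m s = of_oneline n m (U 1 # map (nuinv n) (butlast (oneline n m s)))"

definition imm_precedes :: "idx list \<Rightarrow> idx \<Rightarrow> idx \<Rightarrow> bool" where
  "imm_precedes w x y \<longleftrightarrow> (\<exists>p. Suc p < length w \<and> w ! p = x \<and> w ! Suc p = y)"

end

theory Submission
  imports Defs
begin

text \<open>The shuffle \<open>sbar n m \<sigma>\<close> drops the last entry \<open>n\<close> of the one-line notation,
  relabels the unprimed entries by \<open>\<nu>\<^sup>-\<^sup>1\<close> and prepends \<open>1\<close>.  Relabelling does not change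
  the pattern of down and right steps, so the lattice path of \<open>sbar n m \<sigma>\<close> is that of \<open>\<sigma>\<close>
  with its final down step (the row of \<open>\<lambda>\<^sub>1 = m\<close> boxes) removed and a down step in column
  \<open>0\<close> added at the top, which gives (a).  For (b), applying \<open>(i,j')\<close> on the left acts
  entrywise on the one-line notation and \<open>\<nu>\<^sup>-\<^sup>1\<close> conjugates it into \<open>(i+1,j')\<close>; the new
  leading entry \<open>1\<close> is fixed by \<open>(i+1,j')\<close> because \<open>i \<noteq> n\<close>, as \<open>i\<close> is followed by \<open>j'\<close>
  while \<open>n\<close> is the last entry.\<close>

fun is_primed :: "idx \<Rightarrow> bool" where
  "is_primed (U _) = False"
| "is_primed (P _) = True"

lemma path_rows_snoc_U:
  "path_rows (xs @ [U a]) c = path_rows xs c @ [c + length (filter is_primed xs)]"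
  by (induction xs c rule: path_rows.induct) auto

lemma path_rows_map:
  assumes "\<And>x. is_primed (f x) = is_primed x"
  shows "path_rows (map f xs) c = path_rows xs c"
proof (induction xs arbitrary: c)
  case (Cons x xs)
  then show ?case
    using assms[of x] by (cases x; cases "f x") auto
qed simp

lemma is_primed_nuinv: "is_primed (nuinv n x) = is_primed x"
  by (cases x) (simp_all add: nuinv_def)

lemma inj_nuinv: "0 < n \<Longrightarrow> inj (nuinv n)"
  by (rule injI) (auto simp: nuinv_def split: idx.splits if_splits)

lemma inj_apply_transpose:
  "inj f \<Longrightarrow> f (transpose a b x) = transpose (f a) (f b) (f x)"
  by (auto simp: transpose_def dest: injD)

lemma length_positions [simp]: "length (positions n m) = n + m"
  by (simp add: positions_def)

lemma nth_positions:
  "k < n + m \<Longrightarrow> positions n m ! k = (if k < n then U (Suc k) else P (Suc (k - n)))"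
  by (auto simp: positions_def nth_append)

lemma set_positions: "set (positions n m) = Iset n m"
  by (auto simp: Iset_def positions_def)

lemma length_oneline [simp]: "length (oneline n m s) = n + m"
  by (simp add: oneline_def)

lemma oneline_comp: "oneline n m (f \<circ> s) = map f (oneline n m s)"
  by (simp add: oneline_def)

lemma last_oneline: "0 < m \<Longrightarrow> last (oneline n m s) = s (P m)"
  by (simp add: oneline_def positions_def)

lemma of_oneline_nth_positions:
  "k < n + m \<Longrightarrow> of_oneline n m K (positions n m ! k) = K ! k"
  by (auto simp: of_oneline_def nth_positions)

lemma of_oneline_outside: "x \<notin> Iset n m \<Longrightarrow> of_oneline n m K x = x"
  by (cases x) (auto simp: of_oneline_def Iset_def)

lemma oneline_of_oneline: "length K = n + m \<Longrightarrow> oneline n m (of_oneline n m K) = K"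
  by (intro nth_equalityI) (auto simp: oneline_def of_oneline_nth_positions)

lemma of_oneline_map:
  assumes "length K = n + m" and "\<And>x. x \<notin> Iset n m \<Longrightarrow> f x = x"
  shows "of_oneline n m (map f K) = f \<circ> of_oneline n m K"
proof
  fix x
  show "of_oneline n m (map f K) x = (f \<circ> of_oneline n m K) x"
  proof (cases "x \<in> Iset n m")
    case True
    then obtain k where "k < n + m" "x = positions n m ! k"
      by (metis set_positions in_set_conv_nth length_positions)
    then show ?thesis
      using assms(1) by (simp add: of_oneline_nth_positions)
  next
    case False
    then show ?thesis
      using assms(2) by (simp add: of_oneline_outside)
  qed
qed

lemma distinct_oneline_shuffle:
  assumes "is_shuffle n m s"
  shows "distinct (oneline n m s)"
  by (rule distinct_disjoint_shuffles[of "map U [1..<n+1]" "map P [1..<m+1]"])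
    (use assms in \<open>auto simp: is_shuffle_def distinct_map inj_on_def\<close>)

lemma count_primed_oneline_shuffle:
  assumes "is_shuffle n m s"
  shows "length (filter is_primed (oneline n m s)) = m"
proof -
  have "filter is_primed (oneline n m s)
          \<in> shuffles (filter is_primed (map U [1..<n+1])) (filter is_primed (map P [1..<m+1]))"
    using assms filter_shuffles unfolding is_shuffle_def by blast
  then show ?thesis
    by (simp add: length_shuffles filter_map o_def)
qed

lemma imm_precedes_not_last:
  assumes "distinct w" and "imm_precedes w x y"
  shows "x \<noteq> last w"
proof -
  obtain p where p: "Suc p < length w" "w ! p = x"
    using assms(2) by (auto simp: imm_precedes_def)
  then have "w ! p \<noteq> w ! (length w - 1)"
    using assms(1) nth_eq_iff_index_eq[of w p "length w - 1"] by auto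
  moreover have "w \<noteq> []"
    using p(1) by auto
  ultimately show ?thesis
    using p(2) by (simp add: last_conv_nth)
qed

lemma zeta_sbar:
  assumes "is_shuffle n m \<sigma>" and "0 < m" and "\<sigma> (P m) = U n"
  shows "zeta n m (sbar n m \<sigma>) = lbar (zeta n m \<sigma>)"
proof -
  define L where "L = oneline n m \<sigma>"
  have "L \<noteq> []" and "last L = U n"
    using assms(2,3) by (auto simp: L_def last_oneline simp flip: length_0_conv)
  then have L_snoc: "butlast L @ [U n] = L"
    by (metis append_butlast_last_id)
  have "length (filter is_primed (butlast L @ [U n])) = m"
    using count_primed_oneline_shuffle[OF assms(1), folded L_def] by (simp only: L_snoc)
  then have count: "length (filter is_primed (butlast L)) = m"
    by simp
  have "length (U 1 # map (nuinv n) (butlast L)) = n + m"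
    using assms(2) by (simp add: L_def)
  then have "zeta n m (sbar n m \<sigma>) = rev (path_rows (U 1 # map (nuinv n) (butlast L)) 0)"
    by (simp add: zeta_def sbar_def oneline_of_oneline L_def)
  also have "\<dots> = rev (path_rows (butlast L) 0) @ [0]"
    by (simp add: path_rows_map is_primed_nuinv)
  also have "\<dots> = lbar (rev (path_rows (butlast L @ [U n]) 0))"
    by (simp add: lbar_def path_rows_snoc_U count)
  also have "\<dots> = lbar (zeta n m \<sigma>)"
    unfolding zeta_def L_def[symmetric] by (simp only: L_snoc)
  finally show ?thesis .
qed

lemma sbar_comp:
  assumes "0 < n + m"
    and "\<And>x. nuinv n (f x) = g (nuinv n x)" and "g (U 1) = U 1"
    and "\<And>x. x \<notin> Iset n m \<Longrightarrow> g x = x"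
  shows "sbar n m (f \<circ> s) = g \<circ> sbar n m s"
proof -
  define K where "K = U 1 # map (nuinv n) (butlast (oneline n m s))"
  have "nuinv n \<circ> f = g \<circ> nuinv n"
    using assms(2) by auto
  then have "U 1 # map (nuinv n) (butlast (oneline n m (f \<circ> s))) = map g K"
    using assms(3) by (simp add: K_def oneline_comp map_butlast)
  moreover have "length K = n + m"
    using assms(1) by (simp add: K_def)
  ultimately show ?thesis
    unfolding sbar_def K_def[symmetric] using of_oneline_map assms(4) by metis
qed

lemma sbar_transpose:
  assumes "is_shuffle n m \<sigma>" and "0 < n" and "0 < m" and "\<sigma> (P m) = U n"
    and "1 \<le> i" "i \<le> n" "1 \<le> j" "j \<le> m"
    and "imm_precedes (oneline n m \<sigma>) (U i) (P j)"
  shows "sbar n m (transpose (U i) (P j) \<circ> \<sigma>) = transpose (nuinv n (U i)) (P j) \<circ> sbar n m \<sigma>"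
proof -
  have "U i \<noteq> U n"
    using imm_precedes_not_last[OF distinct_oneline_shuffle[OF assms(1)] assms(9)]
    by (simp add: last_oneline assms(3,4))
  then have nuinv_U_i: "nuinv n (U i) = U (Suc i)" and "Suc i \<le> n"
    using assms(5,6) by (auto simp: nuinv_def)
  show ?thesis
  proof (rule sbar_comp)
    show "nuinv n (transpose (U i) (P j) x) = transpose (nuinv n (U i)) (P j) (nuinv n x)" for x
      by (simp add: inj_apply_transpose[OF inj_nuinv[OF assms(2)]]) (simp add: nuinv_def)
    show "x \<notin> Iset n m \<Longrightarrow> transpose (nuinv n (U i)) (P j) x = x" for x
      using \<open>Suc i \<le> n\<close> assms(7,8) by (auto simp: nuinv_U_i Iset_def transpose_def)
  qed (use assms(2,5) nuinv_U_i in \<open>auto simp: transpose_def\<close>)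
qed

theorem lemma3p5:
  fixes n m :: nat and \<sigma> :: "idx \<Rightarrow> idx"
  assumes "0 < n" and "n < m"
    and "is_shuffle n m \<sigma>"
    and "\<sigma> (P m) = U n"
  shows "zeta n m (sbar n m \<sigma>) = lbar (zeta n m \<sigma>) \<and>
         (\<forall>i j. 1 \<le> i \<longrightarrow> i \<le> n \<longrightarrow> 1 \<le> j \<longrightarrow> j \<le> m \<longrightarrow>
           imm_precedes (oneline n m \<sigma>) (U i) (P j) \<longrightarrow>
           sbar n m (transpose (U i) (P j) \<circ> \<sigma>)
             = transpose (U (if i = n then 1 else i + 1)) (P j) \<circ> sbar n m \<sigma>)"
proof (intro conjI allI impI)
  have "0 < m" using assms(1,2) by simp
  then show "zeta n m (sbar n m \<sigma>) = lbar (zeta n m \<sigma>)"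
    using zeta_sbar assms(3,4) by blast
  fix i j
  assume range: "1 \<le> i" "i \<le> n" "1 \<le> j" "j \<le> m"
    and precedes: "imm_precedes (oneline n m \<sigma>) (U i) (P j)"
  have "nuinv n (U i) = U (if i = n then 1 else i + 1)"
    using range(1,2) by (simp add: nuinv_def)
  with sbar_transpose[OF assms(3,1) \<open>0 < m\<close> assms(4) range precedes]
  show "sbar n m (transpose (U i) (P j) \<circ> \<sigma>)
      = transpose (U (if i = n then 1 else i + 1)) (P j) \<circ> sbar n m \<sigma>"
    by simp
qed

end
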